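(* For every $t\in I$, $\tau\in(0,T-t)$ and $x\in\mathbb{R}^n$, $\widetilde Y(\tau,t,x)\subset\mathrm{cl}\,Y(t,x)$, where $\widetilde Y(\tau,t,x)=\bigcup_{u\in\mathcal{U}}\big(J(t,t+\tau,x,u)+V(t+\tau,x(t+\tau;t,x,u))\big)$.
   Context: Setting (MOC). Fix $T>0$, $I=[0,T]$, integers $n,m,p\ge1$, nonempty compact $U\subset\mathbb{R}^m$. $f:\mathbb{R}^n\times U\to\mathbb{R}^n$ continuous with $\|f(x_1,u)-f(x_2,u)\|\le K_f\|x_1-x_2\|$, $\|f(x,u)\|\le M_f$. $L:\mathbb{R}^n\times U\to\mathbb{R}^p$ continuous, bounded, Lipschitz in $x$ uniformly in $u$. Controls $\mathcal{U}$: bounded Lebesgue measurable $u:I\to U$. $x(s;t,x,u)$ solves $\dot x=f(x,u(s))$ on $[t,T]$, $x(t)=x$; $J(t,t',x,u)=\int_t^{t'}L(x(s;t,x,u),u(s))ds$; $Y(t,x)=\{J(t,T,x,u):u\in\mathcal{U}\}$. $P\subset\mathbb{R}^p$: closed convex pointed cone containing $0$ with nonempty interior; $\mathcal{E}(S,P)=\{y\in S:(y-P)\cap S=\{y\}\}$; $V(t,x)=\mathcal{E}(\mathrm{cl}\,Y(t,x),P)$. *)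

theory Defs
  imports "HOL-Analysis.Analysis"
begin

definition controls :: "real \<Rightarrow> ('m::euclidean_space) set \<Rightarrow> (real \<Rightarrow> 'm) set" where
  "controls T U = {u. u \<in> borel_measurable (lebesgue_on {0..T}) \<and>
                       (\<forall>s\<in>{0..T}. u s \<in> U) \<and> bounded (u ` {0..T})}"

text \<open>Trajectory x(s;t,x,u): the (Caratheodory) solution of x' = f(x,u(s)) on [t,T], x(t)=x,
  i.e. the continuous solution of the integral equation; extended by x outside [t,T].\<close>
definition traj ::
  "('n::euclidean_space \<Rightarrow> 'm \<Rightarrow> 'n) \<Rightarrow> real \<Rightarrow> real \<Rightarrow> 'n \<Rightarrow> (real \<Rightarrow> 'm) \<Rightarrow> real \<Rightarrow> 'n" where
  "traj f T t x u = (THE y. continuous_on {t..T} y \<and>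
      (\<forall>s\<in>{t..T}. (\<lambda>r. f (y r) (u r)) integrable_on {t..s} \<and>
                   y s = x + integral {t..s} (\<lambda>r. f (y r) (u r))) \<and>
      (\<forall>s. s \<notin> {t..T} \<longrightarrow> y s = x))"

definition Jcost ::
  "('n::euclidean_space \<Rightarrow> 'm \<Rightarrow> 'n) \<Rightarrow> ('n \<Rightarrow> 'm \<Rightarrow> 'p::euclidean_space) \<Rightarrow> real \<Rightarrow>
   real \<Rightarrow> real \<Rightarrow> 'n \<Rightarrow> (real \<Rightarrow> 'm) \<Rightarrow> 'p" where
  "Jcost f L T t t' x u = integral {t..t'} (\<lambda>s. L (traj f T t x u s) (u s))"

definition Yset ::
  "('n::euclidean_space \<Rightarrow> 'm::euclidean_space \<Rightarrow> 'n) \<Rightarrow> ('n \<Rightarrow> 'm \<Rightarrow> 'p::euclidean_space) \<Rightarrow> real \<Rightarrow>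
   'm set \<Rightarrow> real \<Rightarrow> 'n \<Rightarrow> 'p set" where
  "Yset f L T U t x = {Jcost f L T t T x u | u. u \<in> controls T U}"

definition eff :: "'p::real_vector set \<Rightarrow> 'p set \<Rightarrow> 'p set" where
  "eff S P = {y \<in> S. ((\<lambda>q. y - q) ` P) \<inter> S = {y}}"

definition Vset ::
  "('n::euclidean_space \<Rightarrow> 'm::euclidean_space \<Rightarrow> 'n) \<Rightarrow> ('n \<Rightarrow> 'm \<Rightarrow> 'p::euclidean_space) \<Rightarrow> real \<Rightarrow>
   'm set \<Rightarrow> 'p set \<Rightarrow> real \<Rightarrow> 'n \<Rightarrow> 'p set" where
  "Vset f L T U P t x = eff (closure (Yset f L T U t x)) P"

definition Ytilde ::
  "('n::euclidean_space \<Rightarrow> 'm::euclidean_space \<Rightarrow> 'n) \<Rightarrow> ('n \<Rightarrow> 'm \<Rightarrow> 'p::euclidean_space) \<Rightarrow> real \<Rightarrow>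
   'm set \<Rightarrow> 'p set \<Rightarrow> real \<Rightarrow> real \<Rightarrow> 'n \<Rightarrow> 'p set" where
  "Ytilde f L T U P \<tau> t x = (\<Union>u\<in>controls T U.
      (\<lambda>v. Jcost f L T t (t + \<tau>) x u + v) ` Vset f L T U P (t + \<tau>) (traj f T t x u (t + \<tau>)))"

end

theory Submission
  imports Defs
begin

(*
  Mathematically this is the dynamic programming principle:
  concatenating u on [t,c] with any control w on [c,T] yields an admissible control whose
  cost is J(t,c,x,u) + J(c,T,x(c),w), so the translate J(t,c,x,u) + Y(c,x(c)) lies in Y(t,x);
  taking closures and using V(c,x(c)) within the closure of Y(c,x(c)) gives the claim.

  Making this rigorous requires knowing that trajectories are well defined, since the
  trajectory is defined by a definite description.
*)

text \<open>A continuous bounded map g evaluated along a continuous curve and an admissible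
  control is measurable and dominated by a constant, hence integrable on subintervals of
  the horizon.\<close>
lemma control_integrand_integrable:
  fixes g :: "'a::euclidean_space \<Rightarrow> 'b::euclidean_space \<Rightarrow> 'c::euclidean_space"
  assumes g_cont: "continuous_on (UNIV \<times> U) (\<lambda>(x, u). g x u)"
    and g_bdd: "\<And>x u. u \<in> U \<Longrightarrow> norm (g x u) \<le> M"
    and u: "u \<in> controls T U" and y: "continuous_on {a..b} y"
    and ab: "0 \<le> a" "b \<le> T"
  shows "(\<lambda>r. g (y r) (u r)) integrable_on {a..b}"
proof -
  have u_meas: "u \<in> borel_measurable (lebesgue_on {a..b})"
    using u ab unfolding controls_def by (auto intro: measurable_restrict_mono)
  have y_meas: "y \<in> borel_measurable (lebesgue_on {a..b})"
    by (rule continuous_imp_measurable_on_sets_lebesgue[OF y]) auto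
  have pair_meas: "(\<lambda>r. (y r, u r)) \<in> measurable (lebesgue_on {a..b}) (restrict_space borel (UNIV \<times> U))"
  proof (rule measurable_restrict_space2)
    show "(\<lambda>r. (y r, u r)) \<in> borel_measurable (lebesgue_on {a..b})"
      using measurable_Pair[OF y_meas u_meas] by (simp add: borel_prod)
  qed (use u ab in \<open>auto simp: controls_def\<close>)
  have g_borel: "(\<lambda>(x, u). g x u) \<in> borel_measurable (restrict_space borel (UNIV \<times> U))"
    by (rule borel_measurable_continuous_on_restrict[OF g_cont])
  have g_meas: "(\<lambda>r. g (y r) (u r)) \<in> borel_measurable (lebesgue_on {a..b})"
    using measurable_comp[OF pair_meas g_borel] by (simp add: comp_def)
  have "(\<lambda>r. g (y r) (u r)) absolutely_integrable_on {a..b}"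
  proof (rule measurable_bounded_by_integrable_imp_absolutely_integrable[OF g_meas, where g="\<lambda>_. M"])
    show "\<And>r. r \<in> {a..b} \<Longrightarrow> norm (g (y r) (u r)) \<le> M"
      using u ab unfolding controls_def by (auto intro!: g_bdd)
  qed (auto intro: integrable_on_const)
  then show ?thesis using set_lebesgue_integral_eq_integral(1) by blast
qed

lemma concat_control:
  assumes u: "u \<in> controls T U" and w: "w \<in> controls T U"
  shows "(\<lambda>r. if r \<le> c then u r else w r) \<in> controls T U"
proof -
  have "(\<lambda>r. if r \<in> {..c} then u r else w r) \<in> borel_measurable (lebesgue_on {0..T})"
  proof (rule measurable_If_set)
    show "u \<in> borel_measurable (lebesgue_on {0..T})" "w \<in> borel_measurable (lebesgue_on {0..T})"
      using u w unfolding controls_def by auto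
    have "{..c} \<inter> {0..T} \<in> sets lebesgue" by (intro sets.Int) auto
    then show "{..c} \<inter> space (lebesgue_on {0..T}) \<in> sets (lebesgue_on {0..T})"
      by (subst sets_restrict_space_iff) auto
  qed
  moreover have "bounded ((\<lambda>r. if r \<le> c then u r else w r) ` {0..T})"
  proof (rule bounded_subset)
    show "bounded (u ` {0..T} \<union> w ` {0..T})" using u w unfolding controls_def by auto
  qed auto
  ultimately show ?thesis using u w unfolding controls_def by auto
qed

text \<open>The integrals of the Picard error terms: the integral of K (K(r-a))^k/k! is
  (K(c-a))^(k+1)/(k+1)!.  This produces the factorial decay of the iterates.\<close>
lemma power_fact_has_integral:
  fixes K D a c :: real
  assumes "a \<le> c"
  shows "((\<lambda>r. K * (K * (r - a))^k / fact k * D) has_integral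
           (K * (c - a))^(Suc k) / fact (Suc k) * D) {a..c}"
proof -
  have deriv: "((\<lambda>r. (K * (r - a))^(Suc k) / fact (Suc k) * D) has_vector_derivative
          K * (K * (r - a))^k / fact k * D) (at r within {a..c})" for r
  proof -
    have "((\<lambda>r. (K * (r - a))^(Suc k) / fact (Suc k) * D) has_real_derivative
        (real (Suc k) * (K * (r - a))^k * (K * 1)) / fact (Suc k) * D) (at r within {a..c})"
      by (intro derivative_eq_intros) auto
    moreover have "(real (Suc k) * (K * (r - a))^k * (K * 1)) / fact (Suc k) * D
                 = K * (K * (r - a))^k / fact k * D"
      by (simp add: field_simps del: of_nat_Suc)
    ultimately show ?thesis by (simp only: has_real_derivative_iff_has_vector_derivative)
  qed
  show ?thesis
    using fundamental_theorem_of_calculus[OF assms deriv] by simp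
qed

text \<open>A Lipschitz constant on a nontrivial space is nonnegative (test on 0 and a basis vector).\<close>
lemma lipschitz_constant_nonneg:
  fixes f :: "'a::euclidean_space \<Rightarrow> 'b \<Rightarrow> 'c::real_normed_vector"
  assumes "u \<in> U" and lip: "\<And>x1 x2 u. u \<in> U \<Longrightarrow> norm (f x1 u - f x2 u) \<le> K * norm (x1 - x2)"
  shows "0 \<le> K"
proof -
  obtain b :: 'a where b: "b \<in> Basis" using nonempty_Basis by blast
  have "0 \<le> norm (f 0 u - f b u)" by simp
  also have "\<dots> \<le> K * norm (0 - b)" by (rule lip[OF assms(1)])
  finally show ?thesis using b by (simp add: zero_le_mult_iff)
qed

section \<open>Well-posedness of the state equation\<close>

definition solves ::
  "('n::euclidean_space \<Rightarrow> 'm::euclidean_space \<Rightarrow> 'n) \<Rightarrow> real \<Rightarrow> real \<Rightarrow> 'n \<Rightarrow>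
   (real \<Rightarrow> 'm) \<Rightarrow> (real \<Rightarrow> 'n) \<Rightarrow> bool" where
  "solves f T t x u y \<longleftrightarrow> continuous_on {t..T} y \<and>
      (\<forall>s\<in>{t..T}. (\<lambda>r. f (y r) (u r)) integrable_on {t..s} \<and>
                   y s = x + integral {t..s} (\<lambda>r. f (y r) (u r))) \<and>
      (\<forall>s. s \<notin> {t..T} \<longrightarrow> y s = x)"

lemma traj_eq_The: "traj f T t x u = (THE y. solves f T t x u y)"
  unfolding traj_def solves_def by simp

text \<open>Projection of the real line onto [a,b]; it lets the Picard operator act on
  bounded continuous functions on the whole line.\<close>
definition clamp :: "real \<Rightarrow> real \<Rightarrow> real \<Rightarrow> real" where
  "clamp a b s = max a (min b s)"

lemma clamp_in: "a \<le> b \<Longrightarrow> clamp a b s \<in> {a..b}"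
  by (auto simp: clamp_def)

lemma clamp_id: "s \<in> {a..b} \<Longrightarrow> clamp a b s = s"
  by (auto simp: clamp_def)

lemma continuous_clamp: "continuous_on S (clamp a b)"
  unfolding clamp_def by (intro continuous_intros)

definition picard ::
  "('n::euclidean_space \<Rightarrow> 'm::euclidean_space \<Rightarrow> 'n) \<Rightarrow> real \<Rightarrow> real \<Rightarrow> 'n \<Rightarrow>
   (real \<Rightarrow> 'm) \<Rightarrow> (real \<Rightarrow>\<^sub>C 'n) \<Rightarrow> (real \<Rightarrow>\<^sub>C 'n)" where
  "picard f T t0 x0 u y = Bcontfun (\<lambda>s. x0 + integral {t0..clamp t0 T s} (\<lambda>r. f (y r) (u r)))"

context
  fixes f :: "'n::euclidean_space \<Rightarrow> 'm::euclidean_space \<Rightarrow> 'n" and U :: "'m set" and T Kf Mf :: real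
  assumes f_cont: "continuous_on (UNIV \<times> U) (\<lambda>(x, u). f x u)"
    and f_lip: "\<And>x1 x2 u. u \<in> U \<Longrightarrow> norm (f x1 u - f x2 u) \<le> Kf * norm (x1 - x2)"
    and f_bdd: "\<And>x u. u \<in> U \<Longrightarrow> norm (f x u) \<le> Mf"
    and Kf: "0 \<le> Kf"
begin

lemma f_integrable:
  "u \<in> controls T U \<Longrightarrow> continuous_on {a..b} y \<Longrightarrow> 0 \<le> a \<Longrightarrow> b \<le> T \<Longrightarrow>
   (\<lambda>r. f (y r) (u r)) integrable_on {a..b}"
  by (rule control_integrand_integrable[OF f_cont f_bdd])

lemma f_integral_bound:
  assumes "u \<in> controls T U" "continuous_on {a..b} y" "0 \<le> a" "a \<le> b" "b \<le> T"
  shows "norm (integral {a..b} (\<lambda>r. f (y r) (u r))) \<le> Mf * (b - a)"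
proof -
  have "norm (integral {a..b} (\<lambda>r. f (y r) (u r))) \<le> integral {a..b} (\<lambda>_. Mf)"
  proof (rule integral_norm_bound_integral[OF f_integrable[OF assms(1,2,3,5)]])
    show "\<And>r. r \<in> {a..b} \<Longrightarrow> norm (f (y r) (u r)) \<le> Mf"
      using assms(1,3,5) unfolding controls_def by (auto intro!: f_bdd)
  qed (rule integrable_const_ivl)
  then show ?thesis using assms by (simp add: mult.commute)
qed

context
  fixes t0 :: real and x0 :: 'n and u :: "real \<Rightarrow> 'm"
  assumes t0: "0 \<le> t0" "t0 \<le> T" and u: "u \<in> controls T U"
begin

lemma picard_apply:
  "apply_bcontfun (picard f T t0 x0 u y) s = x0 + integral {t0..clamp t0 T s} (\<lambda>r. f (y r) (u r))"
proof -
  have "(\<lambda>s. x0 + integral {t0..clamp t0 T s} (\<lambda>r. f (y r) (u r))) \<in> bcontfun"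
  proof (rule bcontfun_normI)
    have "(\<lambda>r. f (y r) (u r)) integrable_on {t0..T}"
      by (rule f_integrable[OF u]) (use t0 in auto)
    then show "continuous_on UNIV (\<lambda>s. x0 + integral {t0..clamp t0 T s} (\<lambda>r. f (y r) (u r)))"
      using clamp_in t0 by (intro continuous_intros continuous_on_compose2
          [OF indefinite_integral_continuous_1 continuous_clamp]) auto
    fix s
    have c: "clamp t0 T s \<in> {t0..T}" using clamp_in t0 by auto
    have "norm (integral {t0..clamp t0 T s} (\<lambda>r. f (y r) (u r))) \<le> Mf * (clamp t0 T s - t0)"
      by (rule f_integral_bound[OF u]) (use c t0 in auto)
    also have "\<dots> \<le> \<bar>Mf\<bar> * (T - t0)"
      using c by (intro mult_mono) auto
    finally show "norm (x0 + integral {t0..clamp t0 T s} (\<lambda>r. f (y r) (u r))) \<le> norm x0 + \<bar>Mf\<bar> * (T - t0)"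
      by (meson norm_triangle_mono order_refl)
  qed
  then show ?thesis unfolding picard_def by (simp add: Bcontfun_inverse)
qed

lemma picard_iterate_pointwise:
  "norm ((picard f T t0 x0 u ^^ k) y s - (picard f T t0 x0 u ^^ k) z s)
     \<le> (Kf * (clamp t0 T s - t0))^k / fact k * dist y z"
proof (induction k arbitrary: s)
  case 0
  then show ?case using dist_bounded[of y s z] by (simp add: dist_norm)
next
  case (Suc k)
  define Y where "Y = (picard f T t0 x0 u ^^ k) y"
  define Z where "Z = (picard f T t0 x0 u ^^ k) z"
  define c where "c = clamp t0 T s"
  have c: "t0 \<le> c" "c \<le> T" using clamp_in[OF t0(2)] c_def by auto
  have iY: "(\<lambda>r. f (Y r) (u r)) integrable_on {t0..c}"
    and iZ: "(\<lambda>r. f (Z r) (u r)) integrable_on {t0..c}"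
    by (rule f_integrable[OF u], use c t0 in auto)+
  have diff: "(picard f T t0 x0 u ^^ Suc k) y s - (picard f T t0 x0 u ^^ Suc k) z s
      = integral {t0..c} (\<lambda>r. f (Y r) (u r) - f (Z r) (u r))"
    by (simp add: Y_def Z_def c_def picard_apply
        integral_diff[OF iY[unfolded Y_def c_def] iZ[unfolded Z_def c_def]])
  have pointwise: "norm (f (Y r) (u r) - f (Z r) (u r)) \<le> Kf * (Kf * (r - t0))^k / fact k * dist y z"
    if r: "r \<in> {t0..c}" for r
  proof -
    have "u r \<in> U" using u r c t0 unfolding controls_def by auto
    then have "norm (f (Y r) (u r) - f (Z r) (u r)) \<le> Kf * norm (Y r - Z r)"
      by (rule f_lip)
    also have "\<dots> \<le> Kf * ((Kf * (r - t0))^k / fact k * dist y z)"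
      using Suc.IH[of r] clamp_id[of r t0 T] r c Kf unfolding Y_def Z_def
      by (intro mult_left_mono) auto
    finally show ?thesis by simp
  qed
  have "norm (integral {t0..c} (\<lambda>r. f (Y r) (u r) - f (Z r) (u r)))
      \<le> integral {t0..c} (\<lambda>r. Kf * (Kf * (r - t0))^k / fact k * dist y z)"
    using integrable_diff[OF iY iZ] has_integral_integrable[OF power_fact_has_integral[OF c(1)]]
      pointwise by (rule integral_norm_bound_integral)
  also have "\<dots> = (Kf * (c - t0))^(Suc k) / fact (Suc k) * dist y z"
    using power_fact_has_integral[OF c(1)] by (rule integral_unique)
  finally show ?case using diff c_def by simp
qed

lemma picard_iterate_dist:
  "dist ((picard f T t0 x0 u ^^ k) y) ((picard f T t0 x0 u ^^ k) z) \<le> (Kf * (T - t0))^k / fact k * dist y z"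
proof (rule dist_bound)
  fix s
  have "clamp t0 T s \<in> {t0..T}" using clamp_in t0 by auto
  then have "(Kf * (clamp t0 T s - t0))^k / fact k * dist y z \<le> (Kf * (T - t0))^k / fact k * dist y z"
    using Kf by (intro mult_right_mono divide_right_mono power_mono mult_left_mono) auto
  then show "dist ((picard f T t0 x0 u ^^ k) y s) ((picard f T t0 x0 u ^^ k) z s) \<le> (Kf * (T - t0))^k / fact k * dist y z"
    using picard_iterate_pointwise[of k y s z] by (simp add: dist_norm)
qed

text \<open>Since (Kf (T - t0))^k / k! tends to 0, some iterate of the Picard operator is a
  contraction; its unique fixed point is then the unique fixed point of the operator.\<close>
lemma picard_unique_fixed_point: "\<exists>!p. picard f T t0 x0 u p = p"
proof -
  let ?a = "Kf * (T - t0)"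
  have "(\<lambda>n. inverse (fact n) * ?a ^ n) \<longlonglongrightarrow> 0"
    by (rule summable_LIMSEQ_zero[OF summable_exp])
  then obtain k where k: "norm (inverse (fact k) * ?a ^ k - 0) < 1"
    by (meson LIMSEQ_iff zero_less_one order_refl)
  define q where "q = ?a ^ k / fact k"
  have q_nonneg: "0 \<le> q" using Kf t0 unfolding q_def by auto
  then have q: "0 \<le> q" "q < 1" using k unfolding q_def by (auto simp: field_simps)
  let ?F = "picard f T t0 x0 u ^^ k"
  have "\<exists>!p. ?F p = p"
    by (rule banach_fix_type[OF q]) (use picard_iterate_dist q_def in auto)
  then obtain p where p: "?F p = p" and p_unique: "\<And>r. ?F r = r \<Longrightarrow> r = p" by metis
  have "?F (picard f T t0 x0 u p) = picard f T t0 x0 u p"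
    by (metis p funpow_swap1)
  then have "picard f T t0 x0 u p = p" using p_unique by blast
  moreover have "r = p" if "picard f T t0 x0 u r = r" for r
  proof -
    have "?F r = r" by (induction k) (use that in auto)
    then show ?thesis using p_unique by blast
  qed
  ultimately show ?thesis by blast
qed

lemma fixed_point_solves:
  assumes fp: "picard f T t0 x0 u p = p"
  shows "solves f T t0 x0 u (\<lambda>s. if s \<in> {t0..T} then p s else x0)" (is "solves _ _ _ _ _ ?y")
  unfolding solves_def
proof (intro conjI ballI allI impI)
  show "continuous_on {t0..T} ?y"
    by (rule continuous_on_eq[of _ "apply_bcontfun p"]) auto
  fix s assume s: "s \<in> {t0..T}"
  have "continuous_on {t0..s} ?y"
    by (rule continuous_on_eq[of _ "apply_bcontfun p"]) (use s in auto)
  then show "(\<lambda>r. f (?y r) (u r)) integrable_on {t0..s}"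
    by (rule f_integrable[OF u]) (use s t0 in auto)
  have "?y s = picard f T t0 x0 u p s" using s fp by simp
  also have "\<dots> = x0 + integral {t0..s} (\<lambda>r. f (p r) (u r))"
    using s by (simp add: picard_apply clamp_id)
  also have "\<dots> = x0 + integral {t0..s} (\<lambda>r. f (?y r) (u r))"
    using s by (intro arg_cong2[where f="(+)"] refl integral_cong) auto
  finally show "?y s = x0 + integral {t0..s} (\<lambda>r. f (?y r) (u r))" .
qed auto

lemma solution_fixed_point:
  assumes y: "solves f T t0 x0 u y"
  defines "q \<equiv> Bcontfun (\<lambda>s. y (clamp t0 T s))"
  shows "picard f T t0 x0 u q = q" and "\<And>s. apply_bcontfun q s = y (clamp t0 T s)"
proof -
  have y_cont: "continuous_on {t0..T} y" using y unfolding solves_def by auto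
  have "(\<lambda>s. y (clamp t0 T s)) \<in> bcontfun"
    unfolding bcontfun_def
  proof (intro CollectI conjI)
    show "continuous_on UNIV (\<lambda>s. y (clamp t0 T s))"
      by (rule continuous_on_compose2[OF y_cont continuous_clamp]) (use clamp_in t0 in auto)
    have "bounded (y ` {t0..T})"
      by (intro compact_imp_bounded compact_continuous_image y_cont) auto
    then show "bounded (range (\<lambda>s. y (clamp t0 T s)))"
      by (rule bounded_subset) (use clamp_in t0 in auto)
  qed
  then show q_apply: "\<And>s. apply_bcontfun q s = y (clamp t0 T s)"
    unfolding q_def by (simp add: Bcontfun_inverse)
  show "picard f T t0 x0 u q = q"
  proof (rule bcontfun_eqI)
    fix s
    define c where "c = clamp t0 T s"
    have c: "c \<in> {t0..T}" using clamp_in t0 c_def by auto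
    have "picard f T t0 x0 u q s = x0 + integral {t0..c} (\<lambda>r. f (q r) (u r))"
      by (simp add: picard_apply c_def)
    also have "\<dots> = x0 + integral {t0..c} (\<lambda>r. f (y r) (u r))"
      using c by (intro arg_cong2[where f="(+)"] refl integral_cong) (auto simp: q_apply clamp_id)
    also have "\<dots> = y c" using y c unfolding solves_def by auto
    finally show "picard f T t0 x0 u q s = q s" by (simp add: q_apply c_def)
  qed
qed

lemma solves_unique_ex: "\<exists>!y. solves f T t0 x0 u y"
proof -
  obtain p where fp: "picard f T t0 x0 u p = p"
    and p_unique: "\<And>q. picard f T t0 x0 u q = q \<Longrightarrow> q = p"
    using picard_unique_fixed_point by metis
  define y where "y s = (if s \<in> {t0..T} then p s else x0)" for s
  have "y' = y" if y': "solves f T t0 x0 u y'" for y'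
  proof
    fix s
    show "y' s = y s"
    proof (cases "s \<in> {t0..T}")
      case True
      then show ?thesis
        using p_unique[OF solution_fixed_point(1)[OF y']] solution_fixed_point(2)[OF y', of s]
        by (simp add: y_def clamp_id)
    qed (use y' in \<open>auto simp: y_def solves_def\<close>)
  qed
  then show ?thesis
    using fixed_point_solves[OF fp] unfolding y_def[abs_def] by blast
qed

lemma traj_solves: "solves f T t0 x0 u (traj f T t0 x0 u)"
  unfolding traj_eq_The by (rule theI'[OF solves_unique_ex])

lemma traj_unique: "solves f T t0 x0 u y \<Longrightarrow> traj f T t0 x0 u = y"
  unfolding traj_eq_The using solves_unique_ex by (rule the1_equality)

end

section \<open>Concatenation of controls\<close>

lemma solves_concat:
  assumes t: "0 \<le> t" "t \<le> c" "c \<le> T" and u: "u \<in> controls T U" and w: "w \<in> controls T U"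
    and y1: "solves f T t x u y1" and y2: "solves f T c (y1 c) w y2"
  shows "solves f T t x (\<lambda>r. if r \<le> c then u r else w r)
           (\<lambda>s. if s \<notin> {t..T} then x else if s \<le> c then y1 s else y2 s)"
    (is "solves _ _ _ _ ?uc ?Y")
proof -
  have y2c: "y2 c = y1 c" using y2 t unfolding solves_def by auto
  have "continuous_on {t..c} ?Y"
    by (rule continuous_on_eq[of _ y1]) (use y1 t in \<open>auto simp: solves_def intro: continuous_on_subset\<close>)
  moreover have "continuous_on {c..T} ?Y"
    by (rule continuous_on_eq[of _ y2]) (use y2 t y2c in \<open>auto simp: solves_def\<close>)
  moreover have "{t..T} = {t..c} \<union> {c..T}" using t by auto
  ultimately have Y_cont: "continuous_on {t..T} ?Y"
    by (metis continuous_on_closed_Un closed_atLeastAtMost)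
  have Y_int: "(\<lambda>r. f (?Y r) (?uc r)) integrable_on {a..b}" if "t \<le> a" "b \<le> T" for a b
    using that t by (intro f_integrable[OF concat_control[OF u w]] continuous_on_subset[OF Y_cont]) auto
  have "?Y s = x + integral {t..s} (\<lambda>r. f (?Y r) (?uc r))" if s: "s \<in> {t..T}" for s
  proof (cases "s \<le> c")
    case True
    have "?Y s = x + integral {t..s} (\<lambda>r. f (y1 r) (u r))" using y1 s True unfolding solves_def by auto
    also have "\<dots> = x + integral {t..s} (\<lambda>r. f (?Y r) (?uc r))"
      using s True by (intro arg_cong2[where f="(+)"] refl integral_cong) auto
    finally show ?thesis .
  next
    case False
    have first: "integral {t..c} (\<lambda>r. f (?Y r) (?uc r)) = integral {t..c} (\<lambda>r. f (y1 r) (u r))"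
      using t by (intro integral_cong) auto
    have second: "integral {c..s} (\<lambda>r. f (?Y r) (?uc r)) = integral {c..s} (\<lambda>r. f (y2 r) (w r))"
      by (rule integral_spike[of "{c}"]) (use s False t in auto)
    have "?Y s = y1 c + integral {c..s} (\<lambda>r. f (y2 r) (w r))"
      using y2 s False unfolding solves_def by auto
    also have "y1 c = x + integral {t..c} (\<lambda>r. f (y1 r) (u r))" using y1 t unfolding solves_def by auto
    also have "x + integral {t..c} (\<lambda>r. f (y1 r) (u r)) + integral {c..s} (\<lambda>r. f (y2 r) (w r))
        = x + (integral {t..c} (\<lambda>r. f (?Y r) (?uc r)) + integral {c..s} (\<lambda>r. f (?Y r) (?uc r)))"
      by (simp only: first second add.assoc)
    also have "\<dots> = x + integral {t..s} (\<lambda>r. f (?Y r) (?uc r))"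
      using Henstock_Kurzweil_Integration.integral_combine[where a=t and c=c and b=s and f="\<lambda>r. f (?Y r) (?uc r)"]
        s False t Y_int[of t s] by auto
    finally show ?thesis .
  qed
  then show ?thesis using Y_cont Y_int unfolding solves_def by auto
qed

lemma Jcost_concat:
  fixes L :: "'n \<Rightarrow> 'm \<Rightarrow> 'p::euclidean_space"
  assumes L_cont: "continuous_on (UNIV \<times> U) (\<lambda>(x, u). L x u)"
    and L_bdd: "\<And>x u. u \<in> U \<Longrightarrow> norm (L x u) \<le> M"
    and t: "0 \<le> t" "t \<le> c" "c \<le> T" and u: "u \<in> controls T U" and w: "w \<in> controls T U"
  shows "Jcost f L T t T x (\<lambda>r. if r \<le> c then u r else w r)
       = Jcost f L T t c x u + Jcost f L T c T (traj f T t x u c) w"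
proof -
  define uc where "uc = (\<lambda>r. if r \<le> c then u r else w r)"
  define y1 where "y1 = traj f T t x u"
  define y2 where "y2 = traj f T c (y1 c) w"
  define Z where "Z = traj f T t x uc"
  have uc: "uc \<in> controls T U" unfolding uc_def by (rule concat_control[OF u w])
  have y1: "solves f T t x u y1" unfolding y1_def by (rule traj_solves) (use t u in auto)
  have y2: "solves f T c (y1 c) w y2" unfolding y2_def by (rule traj_solves) (use t w in auto)
  have Z_eq: "Z = (\<lambda>s. if s \<notin> {t..T} then x else if s \<le> c then y1 s else y2 s)"
    unfolding Z_def uc_def by (rule traj_unique, use t uc[unfolded uc_def] solves_concat[OF t u w y1 y2] in auto)
  have Z_cont: "continuous_on {t..T} Z"
    using traj_solves[of t uc x] t uc unfolding Z_def solves_def by auto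
  have Z_int: "(\<lambda>s. L (Z s) (uc s)) integrable_on {t..T}"
    by (rule control_integrand_integrable[OF L_cont L_bdd uc Z_cont]) (use t in auto)
  have "Jcost f L T t T x uc = integral {t..c} (\<lambda>s. L (Z s) (uc s)) + integral {c..T} (\<lambda>s. L (Z s) (uc s))"
    using Henstock_Kurzweil_Integration.integral_combine[where a=t and c=c and b=T and f="\<lambda>s. L (Z s) (uc s)"] t Z_int by (simp add: Jcost_def Z_def)
  also have "integral {t..c} (\<lambda>s. L (Z s) (uc s)) = Jcost f L T t c x u"
    unfolding Jcost_def using t by (intro integral_cong) (auto simp: Z_eq uc_def y1_def)
  also have "integral {c..T} (\<lambda>s. L (Z s) (uc s)) = Jcost f L T c T (traj f T t x u c) w"
    unfolding Jcost_def by (rule integral_spike[of "{c}"]) (use t in \<open>auto simp: Z_eq uc_def y1_def y2_def\<close>)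
  finally show ?thesis unfolding uc_def .
qed

lemma Yset_shift_subset:
  fixes L :: "'n \<Rightarrow> 'm \<Rightarrow> 'p::euclidean_space"
  assumes L_cont: "continuous_on (UNIV \<times> U) (\<lambda>(x, u). L x u)"
    and L_bdd: "\<And>x u. u \<in> U \<Longrightarrow> norm (L x u) \<le> M"
    and t: "0 \<le> t" "t \<le> c" "c \<le> T" and u: "u \<in> controls T U"
  shows "(+) (Jcost f L T t c x u) ` Yset f L T U c (traj f T t x u c) \<subseteq> Yset f L T U t x"
proof
  fix y assume "y \<in> (+) (Jcost f L T t c x u) ` Yset f L T U c (traj f T t x u c)"
  then obtain w where w: "w \<in> controls T U"
    and y: "y = Jcost f L T t c x u + Jcost f L T c T (traj f T t x u c) w"
    unfolding Yset_def by blast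
  then have "y = Jcost f L T t T x (\<lambda>r. if r \<le> c then u r else w r)"
    using Jcost_concat[OF L_cont L_bdd t u w] by simp
  then show "y \<in> Yset f L T U t x"
    unfolding Yset_def using concat_control[OF u w] by blast
qed

end

theorem lemma5p2:
  fixes f :: "real ^ 'n \<Rightarrow> real ^ 'm \<Rightarrow> real ^ 'n"
    and L :: "real ^ 'n \<Rightarrow> real ^ 'm \<Rightarrow> real ^ 'p"
    and U :: "(real ^ 'm) set" and P :: "(real ^ 'p) set"
    and T Kf Mf K_L M_L :: real
  assumes T_pos: "T > 0"
    and U: "U \<noteq> {}" "compact U"
    and f_cont: "continuous_on (UNIV \<times> U) (\<lambda>(x, u). f x u)"
    and f_lip: "\<And>x1 x2 u. u \<in> U \<Longrightarrow> norm (f x1 u - f x2 u) \<le> Kf * norm (x1 - x2)"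
    and f_bdd: "\<And>x u. u \<in> U \<Longrightarrow> norm (f x u) \<le> Mf"
    and L_cont: "continuous_on (UNIV \<times> U) (\<lambda>(x, u). L x u)"
    and L_lip: "\<And>x1 x2 u. u \<in> U \<Longrightarrow> norm (L x1 u - L x2 u) \<le> K_L * norm (x1 - x2)"
    and L_bdd: "\<And>x u. u \<in> U \<Longrightarrow> norm (L x u) \<le> M_L"
    and P: "closed P" "convex P" "cone P" "0 \<in> P" "P \<inter> uminus ` P = {0}" "interior P \<noteq> {}"
    and t: "t \<in> {0..T}"
    and tau: "0 < \<tau>" "\<tau> < T - t"
  shows "Ytilde f L T U P \<tau> t x \<subseteq> closure (Yset f L T U t x)"
proof
  fix z assume "z \<in> Ytilde f L T U P \<tau> t x"
  then obtain u v where u: "u \<in> controls T U"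
    and v: "v \<in> Vset f L T U P (t + \<tau>) (traj f T t x u (t + \<tau>))"
    and z: "z = Jcost f L T t (t + \<tau>) x u + v"
    unfolding Ytilde_def by blast
  have Kf: "0 \<le> Kf"
    using U(1) f_lip lipschitz_constant_nonneg[of _ U f Kf] by blast
  let ?J = "Jcost f L T t (t + \<tau>) x u" and ?Yc = "Yset f L T U (t + \<tau>) (traj f T t x u (t + \<tau>))"
  have "v \<in> closure ?Yc"
    using v unfolding Vset_def eff_def by blast
  then have "z \<in> (+) ?J ` closure ?Yc" using z by blast
  also have "\<dots> = closure ((+) ?J ` ?Yc)" by (rule closure_translation[symmetric])
  also have "\<dots> \<subseteq> closure (Yset f L T U t x)"
    using t tau by (intro closure_mono Yset_shift_subset[OF f_cont f_lip f_bdd Kf L_cont L_bdd _ _ _ u]) auto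
  finally show "z \<in> closure (Yset f L T U t x)" .
qed

end
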